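(* Let $(W,S)$ be a Coxeter system with $S$ finite and let $A_W=\langle a_s\ (s\in S)\mid (a_sa_t)_{m(s,t)}=(a_ta_s)_{m(s,t)}\ (s,t\in S,\ s\neq t,\ m(s,t)<\infty)\rangle$ be the associated Artin group. Then the assignment $a_s\mapsto e_s$ ($s\in S$) yields a well-defined surjective homomorphism $\psi:A_W\to\operatorname{Ad}(Q_W)$.
   Context: A Coxeter system $(W,S)$: $S$ finite, $m:S\times S\to\mathbb{N}\cup\{\infty\}$ with $m(s,s)=1$, $2\le m(s,t)=m(t,s)\le\infty$ for $s\ne t$, and $W=\langle s\in S\mid (st)^{m(s,t)}=1\ (m(s,t)<\infty)\rangle$. For group elements $g,h$ and an integer $m\ge2$, $(gh)_m$ denotes the alternating product $ghgh\cdots$ with $m$ factors. The Coxeter quandle $Q_W=\bigcup_{w\in W}w^{-1}Sw$ has operation $x\ast y=yxy$, and $\operatorname{Ad}(Q_W)=\langle e_x\ (x\in Q_W)\mid e_y^{-1}e_xe_y=e_{x\ast y}\ (x,y\in Q_W)\rangle$. *)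

theory Defs
  imports "HOL-Algebra.Group" "HOL-Library.Extended_Nat"
begin

text \<open>Group presentations. Words in the free group on a type of generators are lists of
  pairs (x, b); (x, True) is the letter x, (x, False) is its formal inverse.\<close>

type_synonym 'g word = "('g \<times> bool) list"

definition inv_word :: "'g word \<Rightarrow> 'g word" where
  "inv_word w = rev (map (\<lambda>(x, b). (x, \<not> b)) w)"

inductive pres_eqv :: "'g word set \<Rightarrow> 'g word \<Rightarrow> 'g word \<Rightarrow> bool" for R where
  refl: "pres_eqv R w w"
| sym: "pres_eqv R u v \<Longrightarrow> pres_eqv R v u"
| trans: "pres_eqv R u v \<Longrightarrow> pres_eqv R v w \<Longrightarrow> pres_eqv R u w"
| cancel: "pres_eqv R (u @ [(x, b), (x, \<not> b)] @ v) (u @ v)"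
| relator: "r \<in> R \<Longrightarrow> pres_eqv R (u @ r @ v) (u @ v)"

definition pclass :: "'g word set \<Rightarrow> 'g word \<Rightarrow> 'g word set" where
  "pclass R w = {v. pres_eqv R w v}"

definition presented_group :: "'g set \<Rightarrow> 'g word set \<Rightarrow> 'g word set monoid" where
  "presented_group X R =
     \<lparr> carrier = pclass R ` {w. fst ` set w \<subseteq> X},
       mult = (\<lambda>A B. {v. \<exists>a\<in>A. \<exists>b\<in>B. pres_eqv R (a @ b) v}),
       one = pclass R [] \<rparr>"

fun alt :: "'g \<Rightarrow> 'g \<Rightarrow> nat \<Rightarrow> 'g word" where
  "alt s t 0 = []"
| "alt s t (Suc n) = (s, True) # alt t s n"

definition coxeter_matrix :: "'s set \<Rightarrow> ('s \<Rightarrow> 's \<Rightarrow> enat) \<Rightarrow> bool" where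
  "coxeter_matrix S m \<longleftrightarrow> finite S \<and> (\<forall>s\<in>S. m s s = 1) \<and>
     (\<forall>s\<in>S. \<forall>t\<in>S. s \<noteq> t \<longrightarrow> m s t = m t s \<and> 2 \<le> m s t)"

text \<open>Coxeter relators (st)^{m(s,t)} = (st)_{2 m(s,t)} for m(s,t) finite.\<close>
definition coxeter_rels :: "'s set \<Rightarrow> ('s \<Rightarrow> 's \<Rightarrow> enat) \<Rightarrow> 's word set" where
  "coxeter_rels S m = {alt s t (2 * n) | s t n. s \<in> S \<and> t \<in> S \<and> m s t = enat n}"

definition coxeter_group :: "'s set \<Rightarrow> ('s \<Rightarrow> 's \<Rightarrow> enat) \<Rightarrow> 's word set monoid" where
  "coxeter_group S m = presented_group S (coxeter_rels S m)"

definition cox_gen :: "'s set \<Rightarrow> ('s \<Rightarrow> 's \<Rightarrow> enat) \<Rightarrow> 's \<Rightarrow> 's word set" where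
  "cox_gen S m s = pclass (coxeter_rels S m) [(s, True)]"

definition coxeter_quandle :: "'s set \<Rightarrow> ('s \<Rightarrow> 's \<Rightarrow> enat) \<Rightarrow> 's word set set" where
  "coxeter_quandle S m =
     {pclass (coxeter_rels S m) (inv_word w @ [(s, True)] @ w) | w s. s \<in> S \<and> fst ` set w \<subseteq> S}"

definition quandle_op :: "'s set \<Rightarrow> ('s \<Rightarrow> 's \<Rightarrow> enat) \<Rightarrow> 's word set \<Rightarrow> 's word set \<Rightarrow> 's word set" where
  "quandle_op S m x y = y \<otimes>\<^bsub>coxeter_group S m\<^esub> x \<otimes>\<^bsub>coxeter_group S m\<^esub> y"

definition adjoint_rels :: "'s set \<Rightarrow> ('s \<Rightarrow> 's \<Rightarrow> enat) \<Rightarrow> 's word set word set" where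
  "adjoint_rels S m = {[(y, False), (x, True), (y, True), (quandle_op S m x y, False)] | x y.
      x \<in> coxeter_quandle S m \<and> y \<in> coxeter_quandle S m}"

definition adjoint_group :: "'s set \<Rightarrow> ('s \<Rightarrow> 's \<Rightarrow> enat) \<Rightarrow> 's word set word set monoid" where
  "adjoint_group S m = presented_group (coxeter_quandle S m) (adjoint_rels S m)"

definition artin_rels :: "'s set \<Rightarrow> ('s \<Rightarrow> 's \<Rightarrow> enat) \<Rightarrow> 's word set" where
  "artin_rels S m = {alt s t n @ inv_word (alt t s n) | s t n.
      s \<in> S \<and> t \<in> S \<and> s \<noteq> t \<and> m s t = enat n}"

definition artin_group :: "'s set \<Rightarrow> ('s \<Rightarrow> 's \<Rightarrow> enat) \<Rightarrow> 's word set monoid" where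
  "artin_group S m = presented_group S (artin_rels S m)"

end

theory Submission imports Defs begin

text \<open>\<psi> is induced by the word map a_s \<mapsto> e_s, so one must check that the Artin relations
  hold among the e_s and that the e_s generate Ad(Q_W). Both rest on one computation: the Coxeter
  generators are involutions, so for a positive word p with image e_p in Ad(Q_W) the defining
  relations e_s^{-1} e_x e_s = e_{s x s} give e_p^{-1} e_x e_p = e_{p^{-1} x p}. Writing
  (st)_n = p c and (ts)_n = t p with p = (st)_{n-1}, the Coxeter braid relation gives
  p^{-1} t p = c in W, hence e_t e_p = e_p e_c, which is the Artin relation. Every element of
  Q_W is p^{-1} s p for a positive p, so every e_x is a conjugate of some e_s.\<close>

declare pres_eqv.trans[trans]

lemma pres_eqv_append_context:
  "pres_eqv R u v \<Longrightarrow> pres_eqv R (c @ u @ d) (c @ v @ d)"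
proof (induction rule: pres_eqv.induct)
  case (refl w) then show ?case by (rule pres_eqv.refl)
next
  case (sym u v) then show ?case by (blast intro: pres_eqv.sym)
next
  case (trans u v w) then show ?case by (blast intro: pres_eqv.trans)
next
  case (cancel u x b v)
  show ?case using pres_eqv.cancel[of R "c @ u" x b "v @ d"] by simp
next
  case (relator r u v)
  show ?case using pres_eqv.relator[OF relator, of "c @ u" "v @ d"] by simp
qed

lemma pres_eqv_append:
  assumes "pres_eqv R u u'" and "pres_eqv R v v'"
  shows "pres_eqv R (u @ v) (u' @ v')"
proof -
  have "pres_eqv R (u @ v) (u' @ v)"
    using pres_eqv_append_context[OF assms(1), of "[]" v] by simp
  also have "pres_eqv R \<dots> (u' @ v')"
    using pres_eqv_append_context[OF assms(2), of u' "[]"] by simp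
  finally show ?thesis .
qed

lemma pres_eqv_relator_Nil: "r \<in> R \<Longrightarrow> pres_eqv R r []"
  using pres_eqv.relator[of r R "[]" "[]"] by simp

lemma inv_word_append: "inv_word (u @ v) = inv_word v @ inv_word u"
  by (simp add: inv_word_def)

lemma inv_word_simps [simp]:
  "inv_word [] = []"
  "inv_word ((x, b) # w) = inv_word w @ [(x, \<not> b)]"
  by (simp_all add: inv_word_def)

lemma inv_word_inv_word [simp]: "inv_word (inv_word w) = w"
  by (simp add: inv_word_def rev_map comp_def case_prod_unfold)

lemma set_inv_word: "fst ` set (inv_word w) = fst ` set w"
  by (force simp: inv_word_def)

lemma pres_eqv_append_inv_word: "pres_eqv R (w @ inv_word w) []"
proof (induction w)
  case Nil then show ?case by (simp add: inv_word_def pres_eqv.refl)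
next
  case (Cons l w)
  obtain x b where l: "l = (x, b)" by force
  have "pres_eqv R ([(x, b)] @ (w @ inv_word w) @ [(x, \<not> b)]) [(x, b), (x, \<not> b)]"
    using pres_eqv_append_context[OF Cons.IH, of "[(x, b)]" "[(x, \<not> b)]"] by simp
  also have "pres_eqv R \<dots> []"
    using pres_eqv.cancel[of R "[]" x b "[]"] by simp
  finally show ?case by (simp add: l inv_word_def)
qed

lemma pres_eqv_inv_word_append: "pres_eqv R (inv_word w @ w) []"
  using pres_eqv_append_inv_word[of R "inv_word w"] by simp

lemma pres_eqv_inv_word:
  "pres_eqv R u v \<Longrightarrow> pres_eqv R (inv_word u) (inv_word v)"
proof (induction rule: pres_eqv.induct)
  case (refl w) then show ?case by (rule pres_eqv.refl)
next
  case (sym u v) then show ?case by (blast intro: pres_eqv.sym)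
next
  case (trans u v w) then show ?case by (blast intro: pres_eqv.trans)
next
  case (cancel u x b v)
  show ?case using pres_eqv.cancel[of R "inv_word v" x b "inv_word u"]
    by (simp add: inv_word_append inv_word_def)
next
  case (relator r u v)
  have "pres_eqv R (inv_word r @ []) (inv_word r @ r)"
    using pres_eqv_append[OF pres_eqv.refl pres_eqv.sym[OF pres_eqv_relator_Nil[OF relator]]] .
  also have "pres_eqv R \<dots> []" by (rule pres_eqv_inv_word_append)
  finally have "pres_eqv R (inv_word v @ inv_word r @ inv_word u) (inv_word v @ [] @ inv_word u)"
    by (intro pres_eqv_append_context) simp
  then show ?case by (simp add: inv_word_append)
qed

lemma pclass_eq_iff: "pclass R a = pclass R b \<longleftrightarrow> pres_eqv R a b"
  unfolding pclass_def by (auto intro: pres_eqv.refl pres_eqv.sym pres_eqv.trans)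

lemma mult_pclass: "pclass R a \<otimes>\<^bsub>presented_group X R\<^esub> pclass R b = pclass R (a @ b)"
  unfolding presented_group_def pclass_def
  by (auto intro: pres_eqv.refl pres_eqv.trans pres_eqv_append)

lemma carrier_presented_group:
  "carrier (presented_group X R) = pclass R ` {w. fst ` set w \<subseteq> X}"
  by (simp add: presented_group_def)

definition map_word :: "('g \<Rightarrow> 'h) \<Rightarrow> 'g word \<Rightarrow> 'h word" where
  "map_word f = map (\<lambda>(x, b). (f x, b))"

lemma map_word_simps [simp]:
  "map_word f [] = []"
  "map_word f ((x, b) # w) = (f x, b) # map_word f w"
  "map_word f (u @ v) = map_word f u @ map_word f v"
  by (simp_all add: map_word_def)

lemma map_word_inv_word: "map_word f (inv_word w) = inv_word (map_word f w)"
  by (simp add: map_word_def inv_word_def rev_map case_prod_unfold)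

lemma map_word_alt: "map_word f (alt s t n) = alt (f s) (f t) n"
  by (induction n arbitrary: s t) simp_all

lemma set_map_word: "fst ` set (map_word f w) = f ` fst ` set w"
  by (force simp: map_word_def)

definition induced_map :: "'h word set \<Rightarrow> ('g \<Rightarrow> 'h) \<Rightarrow> 'g word set \<Rightarrow> 'h word set" where
  "induced_map R' f A = {v. \<exists>a\<in>A. pres_eqv R' (map_word f a) v}"

lemma pres_eqv_map_word:
  assumes rels: "\<And>r. r \<in> R \<Longrightarrow> pres_eqv R' (map_word f r) []"
  shows "pres_eqv R u v \<Longrightarrow> pres_eqv R' (map_word f u) (map_word f v)"
proof (induction rule: pres_eqv.induct)
  case (refl w) then show ?case by (rule pres_eqv.refl)
next
  case (sym u v) then show ?case by (blast intro: pres_eqv.sym)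
next
  case (trans u v w) then show ?case by (blast intro: pres_eqv.trans)
next
  case (cancel u x b v)
  show ?case using pres_eqv.cancel[of R' "map_word f u" "f x" b "map_word f v"] by simp
next
  case (relator r u v)
  show ?case using pres_eqv_append_context[OF rels[OF relator]] by simp
qed

lemma induced_map_pclass:
  assumes "\<And>r. r \<in> R \<Longrightarrow> pres_eqv R' (map_word f r) []"
  shows "induced_map R' f (pclass R w) = pclass R' (map_word f w)"
  unfolding induced_map_def pclass_def
  by (auto intro: pres_eqv.refl pres_eqv.trans pres_eqv_map_word[OF assms])

lemma induced_map_hom:
  assumes "f ` X \<subseteq> Y" and "\<And>r. r \<in> R \<Longrightarrow> pres_eqv R' (map_word f r) []"
  shows "induced_map R' f \<in> hom (presented_group X R) (presented_group Y R')"
proof (rule homI)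
  fix A assume "A \<in> carrier (presented_group X R)"
  then obtain w where "fst ` set w \<subseteq> X" "A = pclass R w"
    by (auto simp: carrier_presented_group)
  moreover have "fst ` set (map_word f w) \<subseteq> Y"
    using calculation(1) assms(1) by (auto simp: set_map_word)
  ultimately show "induced_map R' f A \<in> carrier (presented_group Y R')"
    using assms(2) by (auto simp: induced_map_pclass carrier_presented_group)
next
  fix A B assume "A \<in> carrier (presented_group X R)" "B \<in> carrier (presented_group X R)"
  then obtain u v where "A = pclass R u" "B = pclass R v"
    by (auto simp: carrier_presented_group)
  then show "induced_map R' f (A \<otimes>\<^bsub>presented_group X R\<^esub> B) =
      induced_map R' f A \<otimes>\<^bsub>presented_group Y R'\<^esub> induced_map R' f B"
    using assms(2) by (simp add: mult_pclass induced_map_pclass)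
qed

lemma induced_map_surj:
  assumes "f ` X \<subseteq> Y" and rels: "\<And>r. r \<in> R \<Longrightarrow> pres_eqv R' (map_word f r) []"
    and gens: "\<And>y. y \<in> Y \<Longrightarrow> \<exists>u. fst ` set u \<subseteq> X \<and> pres_eqv R' (map_word f u) [(y, True)]"
  shows "induced_map R' f ` carrier (presented_group X R) = carrier (presented_group Y R')"
proof
  show "induced_map R' f ` carrier (presented_group X R) \<subseteq> carrier (presented_group Y R')"
    using hom_carrier[OF induced_map_hom[OF assms(1,2)]] .
next
  have words: "\<exists>u. fst ` set u \<subseteq> X \<and> pres_eqv R' (map_word f u) v"
    if "fst ` set v \<subseteq> Y" for v
    using that
  proof (induction v)
    case Nil show ?case using pres_eqv.refl[of R' "[]"] by (intro exI[of _ "[]"]) simp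
  next
    case (Cons l v)
    obtain y b where l: "l = (y, b)" by force
    obtain u where u: "fst ` set u \<subseteq> X" "pres_eqv R' (map_word f u) v"
      using Cons by auto
    obtain uy where uy: "fst ` set uy \<subseteq> X" "pres_eqv R' (map_word f uy) [(y, True)]"
      using gens Cons.prems l by fastforce
    define uy' where "uy' = (if b then uy else inv_word uy)"
    have "pres_eqv R' (map_word f (inv_word uy)) [(y, False)]"
      using pres_eqv_inv_word[OF uy(2)] by (simp add: map_word_inv_word)
    then have "pres_eqv R' (map_word f uy') [(y, b)]"
      using uy(2) by (simp add: uy'_def)
    then have "pres_eqv R' (map_word f (uy' @ u)) ([(y, b)] @ v)"
      using pres_eqv_append[OF _ u(2)] by (simp only: map_word_simps)
    moreover have "fst ` set (uy' @ u) \<subseteq> X"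
      using u(1) uy(1) by (simp add: uy'_def set_inv_word image_Un)
    ultimately show ?case using l by (intro exI[of _ "uy' @ u"]) simp
  qed
  show "carrier (presented_group Y R') \<subseteq> induced_map R' f ` carrier (presented_group X R)"
  proof
    fix B assume "B \<in> carrier (presented_group Y R')"
    then obtain v where v: "fst ` set v \<subseteq> Y" "B = pclass R' v"
      by (auto simp: carrier_presented_group)
    then obtain u where u: "fst ` set u \<subseteq> X" "pres_eqv R' (map_word f u) v"
      using words by blast
    then have "B = induced_map R' f (pclass R u)"
      using v pres_eqv.sym[OF u(2)] by (simp add: induced_map_pclass[OF rels] pclass_eq_iff)
    then show "B \<in> induced_map R' f ` carrier (presented_group X R)"
      using u by (auto simp: carrier_presented_group)
  qed
qed

lemma alt_snoc: "alt a b (Suc n) = alt a b n @ [(if even n then a else b, True)]"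
  by (induction n arbitrary: a b) auto

lemma alt_add:
  "alt a b (n + k) = alt a b n @ alt (if even n then a else b) (if even n then b else a) k"
  by (induction n arbitrary: a b) auto

lemma rev_alt: "rev (alt a b n) = alt (if even n then b else a) (if even n then a else b) n"
proof (induction n arbitrary: a b)
  case 0 then show ?case by simp
next
  case (Suc n)
  have cons_alt: "(x, True) # alt y x n = alt x y n @ [(if even n then x else y, True)]" for x y
    using alt_snoc[of x y n] by simp
  show ?case by (simp add: Suc alt_snoc cons_alt del: alt.simps(2))
qed

lemma set_alt: "set (alt a b n) \<subseteq> {(a, True), (b, True)}"
  by (induction n arbitrary: a b) auto

lemma alt_append_rev_alt: "alt t s n @ rev (alt s t n) = alt t s (2 * n)"
  using alt_add[of t s n n] by (simp add: rev_alt mult_2)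

lemma cox_gen_in_coxeter_quandle: "s \<in> S \<Longrightarrow> cox_gen S m s \<in> coxeter_quandle S m"
  unfolding coxeter_quandle_def cox_gen_def
  by (rule CollectI, rule exI[of _ "[]"], rule exI[of _ s]) (simp add: inv_word_def)

lemma quandle_op_pclass:
  "quandle_op S m (pclass (coxeter_rels S m) a) (pclass (coxeter_rels S m) b)
     = pclass (coxeter_rels S m) (b @ a @ b)"
  unfolding quandle_op_def coxeter_group_def by (simp add: mult_pclass)

lemma adjoint_conj:
  assumes "x \<in> coxeter_quandle S m" "y \<in> coxeter_quandle S m"
  shows "pres_eqv (adjoint_rels S m) [(y, False), (x, True), (y, True)] [(quandle_op S m x y, True)]"
proof -
  let ?z = "quandle_op S m x y"
  have "pres_eqv (adjoint_rels S m) [(y, False), (x, True), (y, True)]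
      ([(y, False), (x, True), (y, True), (?z, False)] @ [(?z, True)])"
    using pres_eqv.sym[OF pres_eqv.cancel[of "adjoint_rels S m" "[(y, False), (x, True), (y, True)]" ?z False "[]"]]
    by simp
  also have "pres_eqv (adjoint_rels S m) \<dots> [(?z, True)]"
  proof -
    have "[(y, False), (x, True), (y, True), (?z, False)] \<in> adjoint_rels S m"
      unfolding adjoint_rels_def using assms by blast
    from pres_eqv.relator[OF this, of "[]" "[(?z, True)]"] show ?thesis by simp
  qed
  finally show ?thesis .
qed

context
  fixes S :: "'s set" and m :: "'s \<Rightarrow> 's \<Rightarrow> enat"
  assumes cm: "coxeter_matrix S m"
begin

lemma coxeter_gen_square: "s \<in> S \<Longrightarrow> pres_eqv (coxeter_rels S m) [(s, True), (s, True)] []"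
proof -
  assume s: "s \<in> S"
  then have "m s s = enat 1" using cm by (simp add: coxeter_matrix_def one_enat_def)
  then have "alt s s (2 * 1) \<in> coxeter_rels S m" using s unfolding coxeter_rels_def by blast
  then show ?thesis by (simp add: pres_eqv_relator_Nil numeral_2_eq_2)
qed

lemma coxeter_letter_sign: "s \<in> S \<Longrightarrow> pres_eqv (coxeter_rels S m) [(s, b)] [(s, True)]"
proof (cases b)
  case True then show ?thesis by (simp add: pres_eqv.refl)
next
  case False
  assume s: "s \<in> S"
  have "pres_eqv (coxeter_rels S m) [(s, False)] ([(s, False), (s, True)] @ [(s, True)])"
    using pres_eqv.sym[OF pres_eqv_append_context[OF coxeter_gen_square[OF s], of "[(s, False)]" "[]"]]
    by simp
  also have "pres_eqv (coxeter_rels S m) \<dots> [(s, True)]"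
    using pres_eqv.cancel[of _ "[]" s False "[(s, True)]"] by simp
  finally show ?thesis using False by simp
qed

lemma coxeter_word_eqv_positive:
  "fst ` set w \<subseteq> S \<Longrightarrow> pres_eqv (coxeter_rels S m) w (map (\<lambda>(x, b). (x, True)) w)"
proof (induction w)
  case Nil then show ?case by (simp add: pres_eqv.refl)
next
  case (Cons l w)
  obtain x b where l: "l = (x, b)" by force
  have "pres_eqv (coxeter_rels S m) ([(x, b)] @ w) ([(x, True)] @ map (\<lambda>(x, b). (x, True)) w)"
    using Cons l by (intro pres_eqv_append coxeter_letter_sign) auto
  then show ?case using l by simp
qed

lemma coxeter_rev_positive_cancel:
  "set p \<subseteq> S \<times> {True} \<Longrightarrow> pres_eqv (coxeter_rels S m) (rev p @ p) []"
proof (induction p)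
  case Nil then show ?case by (simp add: pres_eqv.refl)
next
  case (Cons l p)
  obtain x where l: "l = (x, True)" and x: "x \<in> S" using Cons.prems by auto
  have "pres_eqv (coxeter_rels S m) (rev p @ [(x, True), (x, True)] @ p) (rev p @ [] @ p)"
    using pres_eqv_append_context[OF coxeter_gen_square[OF x]] .
  then show ?case using Cons l by (auto intro: pres_eqv.trans)
qed

lemma coxeter_quandle_conj_closed:
  assumes a: "pclass (coxeter_rels S m) a \<in> coxeter_quandle S m" and s: "s \<in> S"
  shows "pclass (coxeter_rels S m) ([(s, True)] @ a @ [(s, True)]) \<in> coxeter_quandle S m"
proof -
  obtain w r where r: "r \<in> S" and w: "fst ` set w \<subseteq> S"
    and "pclass (coxeter_rels S m) a = pclass (coxeter_rels S m) (inv_word w @ [(r, True)] @ w)"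
    using a unfolding coxeter_quandle_def by blast
  then have "pres_eqv (coxeter_rels S m) a (inv_word w @ [(r, True)] @ w)"
    by (simp add: pclass_eq_iff)
  then have "pres_eqv (coxeter_rels S m) ([(s, True)] @ a @ [(s, True)])
     ([(s, False)] @ (inv_word w @ [(r, True)] @ w) @ [(s, True)])"
    by (intro pres_eqv_append pres_eqv.refl pres_eqv.sym[OF coxeter_letter_sign[OF s]])
  then have "pclass (coxeter_rels S m) ([(s, True)] @ a @ [(s, True)]) =
     pclass (coxeter_rels S m) (inv_word (w @ [(s, True)]) @ [(r, True)] @ w @ [(s, True)])"
    by (simp add: pclass_eq_iff inv_word_def)
  moreover have "fst ` set (w @ [(s, True)]) \<subseteq> S" using w s by auto
  ultimately show ?thesis unfolding coxeter_quandle_def using r by blast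
qed

text \<open>For a positive word p, rev p represents p^{-1} in W.\<close>

lemma adjoint_conj_positive_word:
  "set p \<subseteq> S \<times> {True} \<Longrightarrow> pclass (coxeter_rels S m) a \<in> coxeter_quandle S m \<Longrightarrow>
   pres_eqv (adjoint_rels S m)
     (inv_word (map_word (cox_gen S m) p) @ [(pclass (coxeter_rels S m) a, True)] @ map_word (cox_gen S m) p)
     [(pclass (coxeter_rels S m) (rev p @ a @ p), True)]"
proof (induction p arbitrary: a)
  case Nil then show ?case by (simp add: inv_word_def pres_eqv.refl)
next
  case (Cons l p)
  obtain r where l: "l = (r, True)" and r: "r \<in> S" using Cons.prems by auto
  let ?c = "cox_gen S m r"
  let ?a' = "[(r, True)] @ a @ [(r, True)]"
  have "pres_eqv (adjoint_rels S m) [(?c, False), (pclass (coxeter_rels S m) a, True), (?c, True)]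
         [(quandle_op S m (pclass (coxeter_rels S m) a) ?c, True)]"
    using adjoint_conj[OF Cons.prems(2) cox_gen_in_coxeter_quandle[OF r]] .
  also have "quandle_op S m (pclass (coxeter_rels S m) a) ?c = pclass (coxeter_rels S m) ?a'"
    by (simp add: cox_gen_def quandle_op_pclass)
  finally have step: "pres_eqv (adjoint_rels S m)
      [(?c, False), (pclass (coxeter_rels S m) a, True), (?c, True)]
      [(pclass (coxeter_rels S m) ?a', True)]" .
  have a': "pclass (coxeter_rels S m) ?a' \<in> coxeter_quandle S m"
    using coxeter_quandle_conj_closed[OF Cons.prems(2) r] .
  have "pres_eqv (adjoint_rels S m)
     (inv_word (map_word (cox_gen S m) p) @
       [(?c, False), (pclass (coxeter_rels S m) a, True), (?c, True)] @ map_word (cox_gen S m) p)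
     (inv_word (map_word (cox_gen S m) p) @ [(pclass (coxeter_rels S m) ?a', True)] @ map_word (cox_gen S m) p)"
    using step by (rule pres_eqv_append_context)
  also have "pres_eqv (adjoint_rels S m) \<dots> [(pclass (coxeter_rels S m) (rev p @ ?a' @ p), True)]"
    using Cons.IH[OF _ a'] Cons.prems(1) by simp
  finally show ?case by (simp add: l)
qed

lemma coxeter_braid:
  assumes s: "s \<in> S" and t: "t \<in> S" and n: "m s t = enat n"
  shows "pres_eqv (coxeter_rels S m) (alt t s n) (alt s t n)"
proof (cases "s = t")
  case True then show ?thesis by (simp add: pres_eqv.refl)
next
  case False
  then have "m t s = enat n" using cm s t n by (simp add: coxeter_matrix_def)
  then have "alt t s (2 * n) \<in> coxeter_rels S m" using s t unfolding coxeter_rels_def by blast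
  then have rel: "pres_eqv (coxeter_rels S m) (alt t s n @ rev (alt s t n)) []"
    by (simp add: alt_append_rev_alt pres_eqv_relator_Nil)
  have pos: "set (alt s t n) \<subseteq> S \<times> {True}" using set_alt[of s t n] s t by auto
  have "pres_eqv (coxeter_rels S m) (alt t s n) (alt t s n @ rev (alt s t n) @ alt s t n)"
    using pres_eqv.sym[OF pres_eqv_append_context[OF coxeter_rev_positive_cancel[OF pos], of "alt t s n" "[]"]]
    by simp
  also have "pres_eqv (coxeter_rels S m) \<dots> (alt s t n)"
    using pres_eqv_append[OF rel pres_eqv.refl, of "alt s t n"] by simp
  finally show ?thesis .
qed

lemma adjoint_braid:
  assumes s: "s \<in> S" and t: "t \<in> S" and n: "m s t = enat n"
  shows "pres_eqv (adjoint_rels S m)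
    (alt (cox_gen S m t) (cox_gen S m s) n) (alt (cox_gen S m s) (cox_gen S m t) n)"
proof (cases n)
  case 0 then show ?thesis by (simp add: pres_eqv.refl)
next
  case (Suc k)
  define p where "p = alt s t k"
  define c where "c = (if even k then s else t)"
  let ?p = "map_word (cox_gen S m) p"
  have pos: "set p \<subseteq> S \<times> {True}" using set_alt[of s t k] s t by (auto simp: p_def)
  have alt_ts: "alt t s n = [(t, True)] @ p" by (simp add: Suc p_def)
  have alt_st: "alt s t n = p @ [(c, True)]" by (simp add: Suc p_def c_def alt_snoc del: alt.simps)
  have "pres_eqv (coxeter_rels S m) (rev p @ [(t, True)] @ p) (rev p @ p @ [(c, True)])"
    using pres_eqv_append_context[OF coxeter_braid[OF s t n], of "rev p" "[]"]
    by (simp only: alt_ts alt_st append_Nil2 append_assoc)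
  also have "pres_eqv (coxeter_rels S m) \<dots> [(c, True)]"
    using pres_eqv_append[OF coxeter_rev_positive_cancel[OF pos] pres_eqv.refl, of "[(c, True)]"]
    by simp
  finally have "pclass (coxeter_rels S m) (rev p @ [(t, True)] @ p) = cox_gen S m c"
    by (simp add: pclass_eq_iff cox_gen_def)
  then have conj: "pres_eqv (adjoint_rels S m) (inv_word ?p @ [(cox_gen S m t, True)] @ ?p)
     [(cox_gen S m c, True)]"
    using adjoint_conj_positive_word[OF pos, of "[(t, True)]"] cox_gen_in_coxeter_quandle[OF t]
    by (simp add: cox_gen_def)
  have "pres_eqv (adjoint_rels S m) ((cox_gen S m t, True) # ?p)
      (?p @ inv_word ?p @ [(cox_gen S m t, True)] @ ?p)"
    using pres_eqv.sym[OF pres_eqv_append[OF pres_eqv_append_inv_word pres_eqv.refl,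
        of "adjoint_rels S m" ?p "[(cox_gen S m t, True)] @ ?p"]]
    by simp
  also have "pres_eqv (adjoint_rels S m) \<dots> (?p @ [(cox_gen S m c, True)])"
    using pres_eqv_append[OF pres_eqv.refl conj] .
  finally show ?thesis
    by (simp add: alt_ts alt_st flip: map_word_alt)
qed

lemma artin_rels_trivial_in_adjoint:
  assumes "r \<in> artin_rels S m"
  shows "pres_eqv (adjoint_rels S m) (map_word (cox_gen S m) r) []"
proof -
  obtain s t n where s: "s \<in> S" and t: "t \<in> S" and n: "m s t = enat n"
    and r: "r = alt s t n @ inv_word (alt t s n)"
    using assms unfolding artin_rels_def by blast
  let ?u = "alt (cox_gen S m s) (cox_gen S m t) n" and ?v = "alt (cox_gen S m t) (cox_gen S m s) n"
  have "pres_eqv (adjoint_rels S m) (?u @ inv_word ?v) (?v @ inv_word ?v)"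
    using pres_eqv_append[OF pres_eqv.sym[OF adjoint_braid[OF s t n]] pres_eqv.refl] .
  also have "pres_eqv (adjoint_rels S m) \<dots> []" by (rule pres_eqv_append_inv_word)
  finally show ?thesis by (simp add: r map_word_inv_word map_word_alt)
qed

lemma adjoint_gen_in_image:
  assumes "x \<in> coxeter_quandle S m"
  shows "\<exists>u. fst ` set u \<subseteq> S \<and> pres_eqv (adjoint_rels S m) (map_word (cox_gen S m) u) [(x, True)]"
proof -
  obtain w s where s: "s \<in> S" and w: "fst ` set w \<subseteq> S"
    and x: "x = pclass (coxeter_rels S m) (inv_word w @ [(s, True)] @ w)"
    using assms unfolding coxeter_quandle_def by blast
  define p where "p = map (\<lambda>(x, b). (x, True)) w"
  have pos: "set p \<subseteq> S \<times> {True}" using w by (auto simp: p_def)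
  have "map (\<lambda>(x, b). (x, True)) (inv_word w) = rev p"
    by (simp add: p_def inv_word_def rev_map case_prod_unfold)
  then have "pres_eqv (coxeter_rels S m) (inv_word w) (rev p)"
    using coxeter_word_eqv_positive[of "inv_word w"] w by (simp add: set_inv_word)
  then have "pres_eqv (coxeter_rels S m) (inv_word w @ [(s, True)] @ w) (rev p @ [(s, True)] @ p)"
    using coxeter_word_eqv_positive[OF w] unfolding p_def
    by (intro pres_eqv_append[OF _ pres_eqv_append[OF pres_eqv.refl]])
  then have "x = pclass (coxeter_rels S m) (rev p @ [(s, True)] @ p)"
    by (simp add: x pclass_eq_iff)
  then have "pres_eqv (adjoint_rels S m) (map_word (cox_gen S m) (inv_word p @ [(s, True)] @ p))
      [(x, True)]"
    using adjoint_conj_positive_word[OF pos, of "[(s, True)]"] cox_gen_in_coxeter_quandle[OF s]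
    by (simp add: map_word_inv_word cox_gen_def)
  moreover have "fst ` set (inv_word p @ [(s, True)] @ p) \<subseteq> S"
  proof -
    have "fst ` set p \<subseteq> S" using pos by auto
    then show ?thesis using s by (simp add: set_inv_word image_Un)
  qed
  ultimately show ?thesis by blast
qed

end

theorem proposition3p3:
  fixes S :: "'s set" and m :: "'s \<Rightarrow> 's \<Rightarrow> enat"
  assumes "coxeter_matrix S m"
  shows "\<exists>\<psi>. \<psi> \<in> hom (artin_group S m) (adjoint_group S m) \<and>
    (\<forall>s\<in>S. \<psi> (pclass (artin_rels S m) [(s, True)]) =
             pclass (adjoint_rels S m) [(cox_gen S m s, True)]) \<and>
    \<psi> ` carrier (artin_group S m) = carrier (adjoint_group S m)"
proof -
  let ?\<psi> = "induced_map (adjoint_rels S m) (cox_gen S m)"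
  have gens: "cox_gen S m ` S \<subseteq> coxeter_quandle S m"
    by (rule image_subsetI) (rule cox_gen_in_coxeter_quandle)
  note rels = artin_rels_trivial_in_adjoint[OF assms]
  have "?\<psi> \<in> hom (artin_group S m) (adjoint_group S m)"
    unfolding artin_group_def adjoint_group_def by (rule induced_map_hom[OF gens rels])
  moreover have "?\<psi> (pclass (artin_rels S m) [(s, True)]) =
      pclass (adjoint_rels S m) [(cox_gen S m s, True)]" for s
    by (simp add: induced_map_pclass[OF rels])
  moreover have "?\<psi> ` carrier (artin_group S m) = carrier (adjoint_group S m)"
    unfolding artin_group_def adjoint_group_def
    by (rule induced_map_surj[OF gens rels adjoint_gen_in_image[OF assms]])
  ultimately show ?thesis by blast
qed

end
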